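(* Let $\delta\in(0,1)$, let $X\subset\mathbb{R}_+$ be a Borel set with $0\in X$, let $x_0>0$, and let $\mathcal B_X=\{F_{(z,\sigma)}:z\in X,\sigma\in[0,1]\}$. For each decision rule $q=(q_0,q_1,q_2,\dots)$ there exists a stationary decision rule $\bar q$ (i.e. one with $\bar q_0=\bar q_1=\bar q_2=\cdots$) such that $R_{\bar q}(x_0,\mathcal B_X)\ge R_q(x_0,\mathcal B_X)$.
   Context: Binary search setting. A binary environment $F_{(z,\sigma)}$ ($z\in X$, $\sigma\in[0,1]$) generates i.i.d. alternatives $x_1,x_2,\dots$, each equal to $z$ with probability $\sigma$ and to $0$ with probability $1-\sigma$. The individual starts with outside option $x_0>0$; payoffs are discounted by $\delta$, and stopping at round $t$ yields $\delta^t\max\{x_0,\dots,x_t\}$ (never stopping yields $0$). A decision rule for binary environments is a sequence $q=(q_0,q_1,\dots)$ with $q_t\in[0,1]$: after a history in which the first $t$ alternatives all equal $0$ it stops with probability $q_t$, and after any history containing a nonzero alternative it stops with probability $1$. For an environment $F$ and history $h$, $U_q(F,h)$ is the expected discounted payoff from $h$ onward (payoff $\delta^{s-t}y_s$ when stopping at round $s$ after history $h_t$), and $V(F,h)$ is the supremum of such expected payoffs over all decision rules. An environment is consistent with a history $h_t=(x_0,\dots,x_t)$ if $x_1,\dots,x_t$ occurs with positive probability under it; a prior is a finitely supported distribution $\mu$ over $\mathcal B_X$, with $U_q(\mu,h)=\sum_F\mu(F\mid h)U_q(F,h)$ ($\mu(\cdot\mid h)$ the Bayesian posterior) and $V(\mu,h)=\sup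 U(\mu,h)$. The performance ratio is $R_q(x_0,\mathcal B_X)=\inf_h\inf_\mu U_q(\mu,h)/V(\mu,h)$, the infima over histories starting with $x_0$ and priors over $\mathcal B_X$ consistent with them. *)

theory Defs
  imports "HOL-Analysis.Analysis" "HOL-Probability.Probability_Mass_Function"
begin

text \<open>A binary environment F_(z,sigma) is represented by its parameter pair (z, sigma).
  A history h_t = (x_0, x_1, ..., x_t) is represented by x_0 together with the list
  [x_1, ..., x_t] of alternatives. A decision rule for binary environments is a
  sequence q :: nat => real with values in [0,1].\<close>

definition binary_rule :: "(nat \<Rightarrow> real) \<Rightarrow> bool" where
  "binary_rule q \<longleftrightarrow> (\<forall>t. 0 \<le> q t \<and> q t \<le> 1)"

definition stationary_rule :: "(nat \<Rightarrow> real) \<Rightarrow> bool" where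
  "stationary_rule q \<longleftrightarrow> (\<forall>t. q t = q 0)"

definition alt_prob :: "real \<times> real \<Rightarrow> real \<Rightarrow> real" where
  "alt_prob F x = (if x = fst F then snd F else 0) + (if x = 0 then 1 - snd F else 0)"

definition hist_prob :: "real \<times> real \<Rightarrow> real list \<Rightarrow> real" where
  "hist_prob F xs = prod_list (map (alt_prob F) xs)"

definition consistent :: "real \<times> real \<Rightarrow> real list \<Rightarrow> bool" where
  "consistent F xs \<longleftrightarrow> hist_prob F xs > 0"

definition nonzero_prob :: "real \<times> real \<Rightarrow> real" where
  "nonzero_prob F = (if fst F = 0 then 0 else snd F)"

text \<open>U_q(F,h): expected discounted payoff from h = (x0, xs) onward under rule q.
  After a history with a nonzero alternative, q stops at once and gets max{x_0,...,x_t}.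
  After the all-zero history of length t, at round t+n (reached with probability
  prod_{k<n} (1-q_{t+k})(1-p), p the probability of a nonzero draw) it stops with
  probability q_{t+n} earning delta^n x_0 (= delta^n max{x_0,0,...,0}), or continues and
  with probability p sees z and stops, earning delta^(n+1) max{x_0,z}.
  Never stopping yields 0.\<close>
definition U_env :: "real \<Rightarrow> (nat \<Rightarrow> real) \<Rightarrow> real \<times> real \<Rightarrow> real \<Rightarrow> real list \<Rightarrow> real" where
  "U_env \<delta> q F x0 xs =
     (if \<exists>x\<in>set xs. x \<noteq> 0 then fold max xs x0
      else (let t = length xs; p = nonzero_prob F in
        (\<Sum>n. \<delta> ^ n * (\<Prod>k<n. (1 - q (t + k)) * (1 - p)) *
              (q (t + n) * fold max xs x0 + (1 - q (t + n)) * \<delta> * p * max (fold max xs x0) (fst F)))))"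

definition V_env :: "real \<Rightarrow> real \<times> real \<Rightarrow> real \<Rightarrow> real list \<Rightarrow> real" where
  "V_env \<delta> F x0 xs = (SUP q \<in> {q. binary_rule q}. U_env \<delta> q F x0 xs)"

definition posterior :: "(real \<times> real) pmf \<Rightarrow> real list \<Rightarrow> real \<times> real \<Rightarrow> real" where
  "posterior \<mu> xs F =
     pmf \<mu> F * hist_prob F xs / (\<Sum>G\<in>set_pmf \<mu>. pmf \<mu> G * hist_prob G xs)"

definition prior_consistent :: "(real \<times> real) pmf \<Rightarrow> real list \<Rightarrow> bool" where
  "prior_consistent \<mu> xs \<longleftrightarrow> (\<Sum>G\<in>set_pmf \<mu>. pmf \<mu> G * hist_prob G xs) > 0"

definition U_prior :: "real \<Rightarrow> (nat \<Rightarrow> real) \<Rightarrow> (real \<times> real) pmf \<Rightarrow> real \<Rightarrow> real list \<Rightarrow> real" where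
  "U_prior \<delta> q \<mu> x0 xs = (\<Sum>F\<in>set_pmf \<mu>. posterior \<mu> xs F * U_env \<delta> q F x0 xs)"

definition V_prior :: "real \<Rightarrow> (real \<times> real) pmf \<Rightarrow> real \<Rightarrow> real list \<Rightarrow> real" where
  "V_prior \<delta> \<mu> x0 xs = (SUP q \<in> {q. binary_rule q}. U_prior \<delta> q \<mu> x0 xs)"

definition binary_prior :: "real set \<Rightarrow> (real \<times> real) pmf \<Rightarrow> bool" where
  "binary_prior X \<mu> \<longleftrightarrow> finite (set_pmf \<mu>) \<and> set_pmf \<mu> \<subseteq> X \<times> {0..1}"

definition perf_ratio :: "real \<Rightarrow> real set \<Rightarrow> real \<Rightarrow> (nat \<Rightarrow> real) \<Rightarrow> real" where
  "perf_ratio \<delta> X x0 q =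
     (INF (xs, \<mu>) \<in> {(xs, \<mu>). binary_prior X \<mu> \<and> prior_consistent \<mu> xs}.
        U_prior \<delta> q \<mu> x0 xs / V_prior \<delta> \<mu> x0 xs)"

end

theory Submission
  imports Defs
begin

text \<open>
  Let R be the performance ratio of q. Along a history of zeros a single binary environment is a
  stationary problem: a rule earns x0 A + D (1 - A), where D is the value of waiting for a nonzero
  draw and A is the rule's discounted stopping probability from that round on. The environment that
  never offers anything shows R \<le> A(\<delta>, q), so there is a stationary rule c with
  A(\<delta>, c) = R. A contraction argument shows that under every smaller discount r \<le> \<delta>
  some continuation of q stops at least as fast as c, A(r, q) \<ge> A(r, c). Hence in an
  environment where waiting beats stopping, c earns at least what q earns at that continuation,
  which is at least R times the optimum; where stopping is better an explicit estimate suffices,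
  and environments offering a nonzero alternative with certainty are limits of ones that do not.
  Against a prior, c earns the posterior average of its single-environment payoffs, while the
  optimum is at most the posterior average of the single-environment optima.
\<close>

section \<open>Stationary stopping problems\<close>

text \<open>In a stationary stopping problem, stopping pays a while continuing pays b at once and
  discounts the rest of the future by r; stop_value r a b s t is the value of the rule s from
  round t on.\<close>

definition survival :: "(nat \<Rightarrow> real) \<Rightarrow> nat \<Rightarrow> nat \<Rightarrow> real" where
  "survival s t n = (\<Prod>k<n. 1 - s (t + k))"

definition stop_value :: "real \<Rightarrow> real \<Rightarrow> real \<Rightarrow> (nat \<Rightarrow> real) \<Rightarrow> nat \<Rightarrow> real" where
  "stop_value r a b s t = (\<Sum>n. r ^ n * survival s t n * (s (t + n) * a + (1 - s (t + n)) * b))"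

abbreviation stop_prob :: "real \<Rightarrow> (nat \<Rightarrow> real) \<Rightarrow> nat \<Rightarrow> real" where
  "stop_prob r s t \<equiv> stop_value r 1 0 s t"

lemma binary_rule_const: "0 \<le> c \<Longrightarrow> c \<le> 1 \<Longrightarrow> binary_rule (\<lambda>_. c)"
  by (simp add: binary_rule_def)

lemma survival_0 [simp]: "survival s t 0 = 1"
  by (simp add: survival_def)

lemma survival_Suc: "survival s t (Suc n) = (1 - s t) * survival s (Suc t) n"
  unfolding survival_def by (simp add: prod.lessThan_Suc_shift del: prod.lessThan_Suc)

lemma survival_Suc': "survival s t (Suc n) = survival s t n * (1 - s (t + n))"
  by (simp add: survival_def)

lemma survival_const: "survival (\<lambda>_. c) t n = (1 - c) ^ n"
  by (simp add: survival_def)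

lemma survival_bounds:
  assumes "binary_rule s"
  shows "0 \<le> survival s t n" "survival s t n \<le> 1"
  using assms unfolding survival_def binary_rule_def by (auto intro!: prod_nonneg prod_le_1)

lemma stop_value_term_bound:
  assumes "binary_rule s" "0 \<le> r"
  shows "\<bar>r ^ n * survival s t n * (s (t + n) * a + (1 - s (t + n)) * b)\<bar> \<le> r ^ n * (\<bar>a\<bar> + \<bar>b\<bar>)"
proof -
  have s: "0 \<le> s (t + n)" "s (t + n) \<le> 1"
    using assms(1) unfolding binary_rule_def by auto
  have "\<bar>s (t + n) * a + (1 - s (t + n)) * b\<bar> \<le> \<bar>a\<bar> + \<bar>b\<bar>"
  proof -
    have "\<bar>s (t + n) * a\<bar> \<le> \<bar>a\<bar>" "\<bar>(1 - s (t + n)) * b\<bar> \<le> \<bar>b\<bar>"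
      using s by (auto simp: abs_mult intro: mult_left_le_one_le)
    then show ?thesis by linarith
  qed
  moreover have "\<bar>survival s t n\<bar> \<le> 1"
    using survival_bounds[OF assms(1)] by simp
  ultimately have "\<bar>survival s t n\<bar> * \<bar>s (t + n) * a + (1 - s (t + n)) * b\<bar> \<le> 1 * (\<bar>a\<bar> + \<bar>b\<bar>)"
    by (intro mult_mono) auto
  then show ?thesis
    using assms(2) by (simp add: abs_mult mult_left_mono mult.assoc)
qed

lemma summable_stop_value:
  assumes "binary_rule s" "0 \<le> r" "r < 1"
  shows "summable (\<lambda>n. r ^ n * survival s t n * (s (t + n) * a + (1 - s (t + n)) * b))"
proof (rule summable_comparison_test)
  show "\<exists>N. \<forall>n\<ge>N. norm (r ^ n * survival s t n * (s (t + n) * a + (1 - s (t + n)) * b))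
          \<le> r ^ n * (\<bar>a\<bar> + \<bar>b\<bar>)"
    using stop_value_term_bound[OF assms(1,2)] by auto
  show "summable (\<lambda>n. r ^ n * (\<bar>a\<bar> + \<bar>b\<bar>))"
    using assms by (intro summable_mult2 summable_geometric) auto
qed

lemma stop_value_rec:
  assumes "binary_rule s" "0 \<le> r" "r < 1"
  shows "stop_value r a b s t = s t * a + (1 - s t) * b + (1 - s t) * r * stop_value r a b s (Suc t)"
proof -
  let ?f = "\<lambda>n. r ^ n * survival s t n * (s (t + n) * a + (1 - s (t + n)) * b)"
  let ?g = "\<lambda>n. r ^ n * survival s (Suc t) n * (s (Suc t + n) * a + (1 - s (Suc t + n)) * b)"
  have shift: "?f (Suc n) = (1 - s t) * r * ?g n" for n
    by (simp add: survival_Suc)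
  have "(\<Sum>n. ?f (Suc n)) = (1 - s t) * r * suminf ?g"
    unfolding shift by (intro suminf_mult summable_stop_value assms)
  moreover have "(\<Sum>n. ?f (Suc n)) = suminf ?f - ?f 0"
    by (rule suminf_split_head[OF summable_stop_value[OF assms]])
  ultimately show ?thesis
    unfolding stop_value_def by simp
qed

lemma stop_value_nonneg:
  assumes "binary_rule s" "0 \<le> r" "r < 1" "0 \<le> a" "0 \<le> b"
  shows "0 \<le> stop_value r a b s t"
  unfolding stop_value_def
proof (rule suminf_nonneg[OF summable_stop_value[OF assms(1-3)]])
  fix n
  have "0 \<le> s (t + n)" "s (t + n) \<le> 1"
    using assms(1) unfolding binary_rule_def by auto
  then show "0 \<le> r ^ n * survival s t n * (s (t + n) * a + (1 - s (t + n)) * b)"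
    using assms survival_bounds[OF assms(1)] by simp
qed

lemma stop_value_linear:
  assumes "binary_rule s" "0 \<le> r" "r < 1"
  shows "stop_value r a b s t = a * stop_prob r s t + b * stop_value r 0 1 s t"
proof -
  define f where "f = (\<lambda>n. r ^ n * survival s t n * s (t + n))"
  define g where "g = (\<lambda>n. r ^ n * survival s t n * (1 - s (t + n)))"
  have f: "stop_prob r s t = suminf f" and g: "stop_value r 0 1 s t = suminf g"
    unfolding stop_value_def f_def g_def by simp_all
  have "summable f" "summable g"
    using summable_stop_value[OF assms, of t 1 0] summable_stop_value[OF assms, of t 0 1]
    by (simp_all add: f_def g_def)
  then have "(\<Sum>n. a * f n + b * g n) = a * suminf f + b * suminf g"
    by (simp add: suminf_add[symmetric] summable_mult suminf_mult)
  moreover have "stop_value r a b s t = (\<Sum>n. a * f n + b * g n)"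
    unfolding stop_value_def f_def g_def by (simp add: algebra_simps)
  ultimately show ?thesis
    using f g by simp
qed

lemma stop_value_telescope:
  assumes "binary_rule s" "0 \<le> r" "r < 1"
  shows "stop_value r 1 (1 - r) s t = 1"
proof -
  define f where "f n = r ^ n * survival s t n" for n
  have "f \<longlonglongrightarrow> 0"
  proof (rule Lim_null_comparison)
    show "\<forall>\<^sub>F n in sequentially. norm (f n) \<le> r ^ n"
    proof (rule always_eventually, rule allI)
      fix n
      have "r ^ n * survival s t n \<le> r ^ n"
        using survival_bounds[OF assms(1)] assms(2) by (simp add: mult_left_le)
      then show "norm (f n) \<le> r ^ n"
        using survival_bounds[OF assms(1)] assms(2) by (simp add: f_def)
    qed
    show "(\<lambda>n. r ^ n) \<longlonglongrightarrow> 0"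
      using assms by (intro LIMSEQ_power_zero) auto
  qed
  then have "(\<lambda>n. f n - f (Suc n)) sums (f 0 - 0)"
    by (rule telescope_sums')
  moreover have "f 0 = 1"
    by (simp add: f_def)
  moreover have "(\<lambda>n. f n - f (Suc n))
      = (\<lambda>n. r ^ n * survival s t n * (s (t + n) * 1 + (1 - s (t + n)) * (1 - r)))"
    by (simp add: f_def survival_Suc' algebra_simps)
  ultimately show ?thesis
    unfolding stop_value_def by (metis diff_zero sums_unique)
qed

lemma stop_value_affine:
  assumes "binary_rule s" "0 \<le> r" "r < 1"
  shows "stop_value r a b s t = a * stop_prob r s t + b / (1 - r) * (1 - stop_prob r s t)"
proof -
  have "1 = stop_prob r s t + (1 - r) * stop_value r 0 1 s t"
    using stop_value_telescope[OF assms] stop_value_linear[OF assms, of 1 "1 - r"] by simp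
  then have "stop_value r 0 1 s t = (1 - stop_prob r s t) / (1 - r)"
    using assms(3) by (simp add: field_simps)
  then show ?thesis
    using stop_value_linear[OF assms, of a b] by simp
qed

lemma stop_prob_bounds:
  assumes "binary_rule s" "0 \<le> r" "r < 1"
  shows "0 \<le> stop_prob r s t" "stop_prob r s t \<le> 1"
proof -
  show "0 \<le> stop_prob r s t"
    using stop_value_nonneg[OF assms] by simp
  have "1 = stop_prob r s t + (1 - r) * stop_value r 0 1 s t"
    using stop_value_telescope[OF assms] stop_value_linear[OF assms, of 1 "1 - r"] by simp
  moreover have "0 \<le> (1 - r) * stop_value r 0 1 s t"
    using stop_value_nonneg[OF assms] assms(3) by simp
  ultimately show "stop_prob r s t \<le> 1"
    by linarith
qed

lemma stop_value_le_max:
  assumes "binary_rule s" "0 \<le> r" "r < 1"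
  shows "stop_value r a b s t \<le> max a (b / (1 - r))"
proof -
  have "a * stop_prob r s t + b / (1 - r) * (1 - stop_prob r s t)
        \<le> max a (b / (1 - r)) * stop_prob r s t + max a (b / (1 - r)) * (1 - stop_prob r s t)"
    using stop_prob_bounds[OF assms, of t] by (intro add_mono mult_right_mono) auto
  then show ?thesis
    unfolding stop_value_affine[OF assms, of a b] by (simp add: algebra_simps)
qed

lemma stop_value_ge_min:
  assumes "binary_rule s" "0 \<le> r" "r < 1"
  shows "min a (b / (1 - r)) \<le> stop_value r a b s t"
proof -
  have "min a (b / (1 - r)) * stop_prob r s t + min a (b / (1 - r)) * (1 - stop_prob r s t)
        \<le> a * stop_prob r s t + b / (1 - r) * (1 - stop_prob r s t)"
    using stop_prob_bounds[OF assms, of t] by (intro add_mono mult_right_mono) auto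
  then show ?thesis
    unfolding stop_value_affine[OF assms, of a b] by (simp add: algebra_simps)
qed

lemma const_rule_denominator_pos:
  fixes r c :: real
  assumes "0 \<le> r" "r < 1" "0 \<le> c" "c \<le> 1"
  shows "0 < 1 - r * (1 - c)"
proof -
  have "r * (1 - c) \<le> r"
    using mult_left_le[of "1 - c" r] assms by simp
  then show ?thesis
    using assms(2) by linarith
qed

lemma stop_prob_const:
  assumes "0 \<le> r" "r < 1" "0 \<le> c" "c \<le> 1"
  shows "stop_prob r (\<lambda>_. c) t = c / (1 - r * (1 - c))"
proof -
  have "\<bar>r * (1 - c)\<bar> < 1"
    using const_rule_denominator_pos[OF assms] assms by simp
  then have "(\<lambda>n. c * (r * (1 - c)) ^ n) sums (c * (1 / (1 - r * (1 - c))))"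
    by (intro sums_mult geometric_sums) simp
  then show ?thesis
    unfolding stop_value_def survival_const by (simp add: sums_iff power_mult_distrib mult_ac)
qed

lemma stop_value_const:
  assumes "0 \<le> r" "r < 1" "0 \<le> c" "c \<le> 1"
  shows "stop_value r a b (\<lambda>_. c) t = (c * a + (1 - c) * b) / (1 - r * (1 - c))"
proof -
  have den: "0 < 1 - r * (1 - c)"
    by (rule const_rule_denominator_pos[OF assms])
  then have "1 - c / (1 - r * (1 - c)) = (1 - c) * (1 - r) / (1 - r * (1 - c))"
    by (simp add: field_simps)
  moreover have "b / (1 - r) * ((1 - c) * (1 - r) / (1 - r * (1 - c)))
      = (1 - c) * b / (1 - r * (1 - c))"
    using assms(2) by simp
  ultimately show ?thesis
    unfolding stop_value_affine[OF binary_rule_const[OF assms(3,4)] assms(1,2), of a b t]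
      stop_prob_const[OF assms]
    by (simp add: add_divide_distrib mult.commute)
qed

lemma stop_value_stop_at_once:
  assumes "0 \<le> r" "r < 1"
  shows "stop_value r a b (\<lambda>_. 1) t = a"
  using stop_value_const[OF assms, of 1] by simp

lemma stop_value_never_stop:
  assumes "0 \<le> r" "r < 1"
  shows "stop_value r a b (\<lambda>_. 0) t = b / (1 - r)"
  using stop_value_const[OF assms, of 0] by simp

lemma nonpos_if_contracting:
  fixes h :: "nat \<Rightarrow> real"
  assumes "0 \<le> d" "d < 1" "\<And>t. h t \<le> d * max (h (Suc t)) 0" "\<And>t. \<bar>h t\<bar> \<le> B"
  shows "h t \<le> 0"
proof -
  have iter: "max (h t) 0 \<le> d ^ n * B" for n t
  proof (induction n arbitrary: t)
    case 0
    show ?case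
      using assms(4)[of t] by (auto simp: abs_le_iff)
  next
    case (Suc n)
    have "max (h t) 0 \<le> d * max (h (Suc t)) 0"
      using assms(1) assms(3)[of t] by simp
    also have "\<dots> \<le> d * (d ^ n * B)"
      using Suc[of "Suc t"] assms(1) by (rule mult_left_mono)
    finally show ?case
      by simp
  qed
  have "(\<lambda>n. d ^ n * B) \<longlonglongrightarrow> 0 * B"
    using assms(1,2) by (intro tendsto_intros) auto
  then have "max (h t) 0 \<le> 0 * B"
    by (rule LIMSEQ_le_const) (use iter in auto)
  then show ?thesis
    by simp
qed

lemma abs_stop_value_le:
  assumes "binary_rule s" "0 \<le> r" "r < 1"
  shows "\<bar>stop_value r a b s t\<bar> \<le> \<bar>a\<bar> + \<bar>b\<bar> / (1 - r)"
proof -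
  define D where "D = b / (1 - r)"
  have "\<bar>stop_value r a b s t\<bar> \<le> \<bar>a\<bar> + \<bar>D\<bar>"
    using stop_value_le_max[OF assms, of a b t] stop_value_ge_min[OF assms, of a b t]
    unfolding D_def[symmetric] by (simp add: abs_le_iff) linarith
  moreover have "\<bar>D\<bar> = \<bar>b\<bar> / (1 - r)"
    using assms(3) by (simp add: D_def)
  ultimately show ?thesis
    by simp
qed

lemma stop_value_discount_mono:
  assumes s: "binary_rule s" and r: "0 \<le> r" "r \<le> \<delta>" "\<delta> < 1"
    and nonpos: "\<And>t. stop_value r a b s t \<le> 0"
  shows "stop_value \<delta> a b s t \<le> stop_value r a b s t"
proof -
  have r1: "r < 1" and d0: "0 \<le> \<delta>"
    using r by auto
  define G where "G t = stop_value \<delta> a b s t - stop_value r a b s t" for t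
  have "G t \<le> 0"
  proof (rule nonpos_if_contracting[of \<delta>])
    fix t
    have st: "0 \<le> s t" "s t \<le> 1"
      using s unfolding binary_rule_def by auto
    have "G t = (1 - s t) * (\<delta> * G (Suc t) + (\<delta> - r) * stop_value r a b s (Suc t))"
      unfolding G_def stop_value_rec[OF s d0 r(3), of a b t] stop_value_rec[OF s r(1) r1, of a b t]
      by (simp add: algebra_simps)
    also have "\<dots> \<le> (1 - s t) * (\<delta> * max (G (Suc t)) 0)"
    proof -
      have "(\<delta> - r) * stop_value r a b s (Suc t) \<le> 0"
        using r nonpos[of "Suc t"] by (simp add: mult_nonneg_nonpos)
      moreover have "\<delta> * G (Suc t) \<le> \<delta> * max (G (Suc t)) 0"
        using d0 by (simp add: mult_left_mono)
      ultimately show ?thesis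
        using st by (intro mult_left_mono) auto
    qed
    also have "\<dots> \<le> \<delta> * max (G (Suc t)) 0"
      using st d0 by (intro mult_left_le_one_le) auto
    finally show "G t \<le> \<delta> * max (G (Suc t)) 0" .
  next
    fix t
    define K where "K = \<bar>a\<bar> + \<bar>b\<bar> / (1 - \<delta>)"
    have "\<bar>b\<bar> / (1 - r) \<le> \<bar>b\<bar> / (1 - \<delta>)"
      using r by (intro divide_left_mono) auto
    then have "\<bar>stop_value \<delta> a b s t\<bar> \<le> K" "\<bar>stop_value r a b s t\<bar> \<le> K"
      using abs_stop_value_le[OF s d0 r(3), of a b t] abs_stop_value_le[OF s r(1) r1, of a b t]
      unfolding K_def by linarith+
    then show "\<bar>G t\<bar> \<le> 2 * K"
      unfolding G_def by linarith
  qed (use d0 r in auto)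
  then show ?thesis
    unfolding G_def by simp
qed

lemma stop_value_const_gap:
  assumes "binary_rule s" "0 \<le> r" "r < 1"
  shows "stop_value r (1 - c) (- c) s t = ((1 - r * (1 - c)) * stop_prob r s t - c) / (1 - r)"
  using assms(3) unfolding stop_value_affine[OF assms, of "1 - c" "- c"]
  by (simp add: field_simps)

text \<open>The value stop_value \<rho> (1 - c) (- c) s t has the sign of
  stop_prob \<rho> s t - stop_prob \<rho> (\<lambda>_. c) t, and lowering the discount can only raise it
  while it stays nonpositive.\<close>
lemma exists_stop_prob_ge_const:
  assumes s: "binary_rule s" and r: "0 \<le> r" "r \<le> \<delta>" "\<delta> < 1" and c: "0 \<le> c" "c \<le> 1"
    and ge: "stop_prob \<delta> (\<lambda>_. c) 0 \<le> stop_prob \<delta> s 0"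
  shows "\<exists>t. stop_prob r (\<lambda>_. c) t \<le> stop_prob r s t"
proof (rule ccontr)
  assume "\<nexists>t. stop_prob r (\<lambda>_. c) t \<le> stop_prob r s t"
  then have lt: "stop_prob r s t < c / (1 - r * (1 - c))" for t
    using stop_prob_const[OF r(1) _ c] r by (auto simp: not_le)
  have r1: "r < 1" and d0: "0 \<le> \<delta>"
    using r by auto
  have neg: "stop_value r (1 - c) (- c) s t < 0" for t
    using lt[of t] const_rule_denominator_pos[OF r(1) r1 c] r1
    unfolding stop_value_const_gap[OF s r(1) r1] by (simp add: field_simps)
  then have "stop_value \<delta> (1 - c) (- c) s 0 \<le> stop_value r (1 - c) (- c) s 0"
    by (intro stop_value_discount_mono[OF s r] less_imp_le)
  with neg[of 0] have "stop_value \<delta> (1 - c) (- c) s 0 < 0"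
    by linarith
  then have "stop_prob \<delta> s 0 < c / (1 - \<delta> * (1 - c))"
    using const_rule_denominator_pos[OF d0 r(3) c] r(3)
    unfolding stop_value_const_gap[OF s d0 r(3)] by (simp add: field_simps)
  then show False
    using ge stop_prob_const[OF d0 r(3) c] by simp
qed

lemma stop_value_const_ge:
  assumes "0 \<le> c" "c \<le> 1" "0 \<le> r" "r \<le> \<delta>" "\<delta> < 1" "0 \<le> a" "(\<delta> - r) * a \<le> b"
  shows "stop_prob \<delta> (\<lambda>_. c) 0 * a \<le> stop_value r a b (\<lambda>_. c) t"
proof -
  define u where "u = 1 - c"
  have u: "0 \<le> u" "u \<le> 1"
    using assms unfolding u_def by auto
  have d1: "0 < 1 - \<delta> * u" and d2: "0 < 1 - r * u"
    using const_rule_denominator_pos[of \<delta> c] const_rule_denominator_pos[of r c] assms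
    by (simp_all add: u_def)
  have "(c + u * (\<delta> - r)) * (1 - \<delta> * u) - c * (1 - r * u) = u * u * (\<delta> - r) * (1 - \<delta>)"
    unfolding u_def by (simp add: algebra_simps)
  moreover have "0 \<le> u * u * (\<delta> - r) * (1 - \<delta>)"
    using u assms by simp
  ultimately have "c * (1 - r * u) * a \<le> (c + u * (\<delta> - r)) * (1 - \<delta> * u) * a"
    using assms(6) by (intro mult_right_mono) auto
  moreover have "(c * a + u * ((\<delta> - r) * a)) * (1 - \<delta> * u) \<le> (c * a + u * b) * (1 - \<delta> * u)"
    using u assms(7) d1 by (intro mult_right_mono add_left_mono mult_left_mono) auto
  ultimately have "c * a * (1 - r * u) \<le> (c * a + u * b) * (1 - \<delta> * u)"
    by (simp add: algebra_simps)
  then show ?thesis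
    using d1 d2 assms(1-5)
    by (simp add: stop_prob_const stop_value_const u_def[symmetric] divide_simps mult_ac)
qed

section \<open>Binary environments and priors\<close>

text \<open>After t zeros the environment F is such a problem with a = x0: a nonzero draw, which
  comes with probability nonzero_prob F and is taken at once, yields env_reward, while another
  zero continues the problem with discount env_discount.\<close>

definition env_discount :: "real \<Rightarrow> real \<times> real \<Rightarrow> real" where
  "env_discount \<delta> F = \<delta> * (1 - nonzero_prob F)"

definition env_reward :: "real \<Rightarrow> real \<Rightarrow> real \<times> real \<Rightarrow> real" where
  "env_reward \<delta> x0 F = \<delta> * nonzero_prob F * max x0 (fst F)"

definition wait_value :: "real \<Rightarrow> real \<Rightarrow> real \<times> real \<Rightarrow> real" where
  "wait_value \<delta> x0 F = env_reward \<delta> x0 F / (1 - env_discount \<delta> F)"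

definition env_value :: "real \<Rightarrow> real \<Rightarrow> real \<times> real \<Rightarrow> real" where
  "env_value \<delta> x0 F = max x0 (wait_value \<delta> x0 F)"

lemma nonzero_prob_bounds:
  assumes "snd F \<in> {0..1}"
  shows "0 \<le> nonzero_prob F" "nonzero_prob F \<le> 1"
  using assms by (auto simp: nonzero_prob_def)

lemma env_discount_bounds:
  assumes "snd F \<in> {0..1}" "0 \<le> \<delta>"
  shows "0 \<le> env_discount \<delta> F" "env_discount \<delta> F \<le> \<delta>"
  using nonzero_prob_bounds[OF assms(1)] assms(2)
  by (auto simp: env_discount_def mult_left_le)

lemma env_reward_nonneg:
  assumes "snd F \<in> {0..1}" "0 \<le> \<delta>" "0 \<le> x0"
  shows "0 \<le> env_reward \<delta> x0 F"
  using nonzero_prob_bounds[OF assms(1)] assms(2,3) by (simp add: env_reward_def)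

lemma fold_max_ge: "(x0::real) \<le> fold max xs x0"
  by (induction xs arbitrary: x0) (auto intro: order_trans[OF max.cobounded2])

lemma fold_max_zeros: "\<forall>x\<in>set xs. x = 0 \<Longrightarrow> 0 \<le> (x0::real) \<Longrightarrow> fold max xs x0 = x0"
  by (induction xs arbitrary: x0) (auto simp: max_def)

lemma U_env_nonzero_history: "\<exists>x\<in>set xs. x \<noteq> 0 \<Longrightarrow> U_env \<delta> s F x0 xs = fold max xs x0"
  by (simp add: U_env_def)

lemma U_env_zero_history:
  assumes "\<forall>x\<in>set xs. x = 0" "0 \<le> x0"
  shows "U_env \<delta> s F x0 xs
    = stop_value (env_discount \<delta> F) x0 (env_reward \<delta> x0 F) s (length xs)"
  using assms
  unfolding U_env_def stop_value_def Let_def fold_max_zeros[OF assms] env_discount_def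
    env_reward_def survival_def
  by (simp add: prod.distrib power_mult_distrib mult_ac)

lemma env_stop_value_le_env_value:
  assumes "binary_rule s" "snd F \<in> {0..1}" "0 \<le> \<delta>" "\<delta> < 1"
  shows "stop_value (env_discount \<delta> F) x0 (env_reward \<delta> x0 F) s t \<le> env_value \<delta> x0 F"
  using stop_value_le_max[OF assms(1) env_discount_bounds(1)[OF assms(2,3)]]
    env_discount_bounds(2)[OF assms(2,3)] assms(4)
  by (simp add: env_value_def wait_value_def)

lemma hist_prob_nonneg: "snd F \<in> {0..1} \<Longrightarrow> 0 \<le> hist_prob F xs"
  unfolding hist_prob_def alt_prob_def by (induction xs) auto

lemma hist_prob_zeros: "hist_prob F (replicate t 0) = alt_prob F 0 ^ t"
  unfolding hist_prob_def by (induction t) auto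

lemma posterior_nonneg:
  assumes "binary_prior X \<mu>" "prior_consistent \<mu> xs" "F \<in> set_pmf \<mu>"
  shows "0 \<le> posterior \<mu> xs F"
  using assms hist_prob_nonneg[of F xs]
  by (auto simp: posterior_def binary_prior_def prior_consistent_def)

lemma sum_posterior:
  assumes "prior_consistent \<mu> xs"
  shows "(\<Sum>F\<in>set_pmf \<mu>. posterior \<mu> xs F) = 1"
  using assms unfolding posterior_def prior_consistent_def sum_divide_distrib[symmetric] by simp

definition expected_env_value :: "real \<Rightarrow> real \<Rightarrow> (real \<times> real) pmf \<Rightarrow> real list \<Rightarrow> real" where
  "expected_env_value \<delta> x0 \<mu> xs = (\<Sum>F\<in>set_pmf \<mu>. posterior \<mu> xs F * env_value \<delta> x0 F)"

context
  fixes \<delta> x0 :: real and X :: "real set" and \<mu> :: "(real \<times> real) pmf" and xs :: "real list"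
  assumes \<delta>: "0 < \<delta>" "\<delta> < 1" and x0: "0 < x0"
    and prior: "binary_prior X \<mu>" and consistent: "prior_consistent \<mu> xs"
begin

lemma support_env_params:
  assumes "F \<in> set_pmf \<mu>"
  shows "0 \<le> env_discount \<delta> F" "env_discount \<delta> F < 1" "0 \<le> env_reward \<delta> x0 F"
proof -
  have F: "snd F \<in> {0..1}"
    using assms prior by (auto simp: binary_prior_def)
  show "0 \<le> env_discount \<delta> F" "env_discount \<delta> F < 1"
    using env_discount_bounds[OF F, of \<delta>] \<delta> by simp_all
  show "0 \<le> env_reward \<delta> x0 F"
    using env_reward_nonneg[OF F, of \<delta> x0] \<delta> x0 by simp
qed

lemma U_prior_nonzero_history:
  "\<exists>x\<in>set xs. x \<noteq> 0 \<Longrightarrow> U_prior \<delta> s \<mu> x0 xs = fold max xs x0"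
  unfolding U_prior_def U_env_nonzero_history sum_distrib_right[symmetric]
  by (simp add: sum_posterior[OF consistent])

lemma V_prior_nonzero_history:
  "\<exists>x\<in>set xs. x \<noteq> 0 \<Longrightarrow> V_prior \<delta> \<mu> x0 xs = fold max xs x0"
  unfolding V_prior_def U_prior_nonzero_history
  using binary_rule_const[of 1] by (subst cSUP_const) auto

context
  assumes zeros: "\<forall>x\<in>set xs. x = 0"
begin

lemma U_prior_zero_history:
  "U_prior \<delta> s \<mu> x0 xs = (\<Sum>F\<in>set_pmf \<mu>. posterior \<mu> xs F *
     stop_value (env_discount \<delta> F) x0 (env_reward \<delta> x0 F) s (length xs))"
  unfolding U_prior_def U_env_zero_history[OF zeros less_imp_le[OF x0]] ..

lemma U_prior_zero_history_nonneg:
  assumes "binary_rule s"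
  shows "0 \<le> U_prior \<delta> s \<mu> x0 xs"
  unfolding U_prior_zero_history
  using posterior_nonneg[OF prior consistent] support_env_params x0
  by (intro sum_nonneg mult_nonneg_nonneg stop_value_nonneg[OF assms]) auto

lemma U_prior_le_expected_env_value:
  assumes "binary_rule s"
  shows "U_prior \<delta> s \<mu> x0 xs \<le> expected_env_value \<delta> x0 \<mu> xs"
  unfolding U_prior_zero_history expected_env_value_def
proof (intro sum_mono mult_left_mono)
  fix F
  assume F: "F \<in> set_pmf \<mu>"
  have "snd F \<in> {0..1}"
    using F prior by (auto simp: binary_prior_def)
  then show "stop_value (env_discount \<delta> F) x0 (env_reward \<delta> x0 F) s (length xs) \<le> env_value \<delta> x0 F"
    using env_stop_value_le_env_value[OF assms] \<delta> by simp
  show "0 \<le> posterior \<mu> xs F"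
    using posterior_nonneg[OF prior consistent F] .
qed

lemma V_prior_le_expected_env_value: "V_prior \<delta> \<mu> x0 xs \<le> expected_env_value \<delta> x0 \<mu> xs"
  unfolding V_prior_def
  using binary_rule_const[of 1] U_prior_le_expected_env_value by (intro cSUP_least) auto

lemma U_prior_le_V_prior:
  assumes "binary_rule s"
  shows "U_prior \<delta> s \<mu> x0 xs \<le> V_prior \<delta> \<mu> x0 xs"
  unfolding V_prior_def
proof (rule cSUP_upper)
  show "s \<in> {q. binary_rule q}"
    using assms by simp
  show "bdd_above ((\<lambda>q. U_prior \<delta> q \<mu> x0 xs) ` {q. binary_rule q})"
    using U_prior_le_expected_env_value by (intro bdd_aboveI2) auto
qed

lemma x0_le_V_prior: "x0 \<le> V_prior \<delta> \<mu> x0 xs"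
proof -
  have stop: "stop_value (env_discount \<delta> F) x0 (env_reward \<delta> x0 F) (\<lambda>_. 1) (length xs) = x0"
    if "F \<in> set_pmf \<mu>" for F
    using support_env_params[OF that] by (intro stop_value_stop_at_once)
  have "U_prior \<delta> (\<lambda>_. 1) \<mu> x0 xs = (\<Sum>F\<in>set_pmf \<mu>. posterior \<mu> xs F) * x0"
    unfolding U_prior_zero_history sum_distrib_right by (rule sum.cong) (simp_all add: stop)
  then show ?thesis
    using U_prior_le_V_prior[OF binary_rule_const[of 1]] sum_posterior[OF consistent] by simp
qed

end

lemma ratio_nonneg:
  assumes "binary_rule s"
  shows "0 \<le> U_prior \<delta> s \<mu> x0 xs / V_prior \<delta> \<mu> x0 xs"
proof (cases "\<exists>x\<in>set xs. x \<noteq> 0")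
  case True
  then show ?thesis
    using U_prior_nonzero_history V_prior_nonzero_history fold_max_ge[of x0 xs] x0 by simp
next
  case False
  then show ?thesis
    using U_prior_zero_history_nonneg[OF _ assms] x0_le_V_prior x0 by simp
qed

end

lemma perf_ratio_le_ratio:
  assumes "0 < \<delta>" "\<delta> < 1" "0 < x0" "binary_rule s"
    and "binary_prior X \<mu>" "prior_consistent \<mu> xs"
  shows "perf_ratio \<delta> X x0 s \<le> U_prior \<delta> s \<mu> x0 xs / V_prior \<delta> \<mu> x0 xs"
proof -
  have "bdd_below ((\<lambda>(xs, \<mu>). U_prior \<delta> s \<mu> x0 xs / V_prior \<delta> \<mu> x0 xs) `
          {(xs, \<mu>). binary_prior X \<mu> \<and> prior_consistent \<mu> xs})"
    using ratio_nonneg[OF assms(1-3) _ _ assms(4)] by (intro bdd_belowI[where m = 0]) auto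
  then have "perf_ratio \<delta> X x0 s
      \<le> (\<lambda>(xs, \<mu>). U_prior \<delta> s \<mu> x0 xs / V_prior \<delta> \<mu> x0 xs) (xs, \<mu>)"
    unfolding perf_ratio_def by (rule cINF_lower) (use assms(5,6) in auto)
  then show ?thesis
    by simp
qed

lemma binary_prior_return_pmf: "fst F \<in> X \<Longrightarrow> snd F \<in> {0..1} \<Longrightarrow> binary_prior X (return_pmf F)"
  by (cases F) (simp add: binary_prior_def)

lemma prior_consistent_return_pmf_zeros:
  "0 < alt_prob F 0 \<Longrightarrow> prior_consistent (return_pmf F) (replicate t 0)"
  by (simp add: prior_consistent_def hist_prob_zeros)

lemma posterior_return_pmf: "prior_consistent (return_pmf F) xs \<Longrightarrow> posterior (return_pmf F) xs F = 1"
  by (simp add: prior_consistent_def posterior_def)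

context
  fixes \<delta> x0 :: real and X :: "real set" and F :: "real \<times> real"
  assumes \<delta>: "0 < \<delta>" "\<delta> < 1" and x0: "0 < x0"
    and F: "fst F \<in> X" "snd F \<in> {0..1}" "0 < alt_prob F 0"
begin

lemma U_prior_single_env:
  "U_prior \<delta> s (return_pmf F) x0 (replicate t 0)
    = stop_value (env_discount \<delta> F) x0 (env_reward \<delta> x0 F) s t"
  using U_prior_zero_history[OF \<delta> x0 binary_prior_return_pmf[OF F(1,2)]
      prior_consistent_return_pmf_zeros[OF F(3)]]
    posterior_return_pmf[OF prior_consistent_return_pmf_zeros[OF F(3)]]
  by simp

lemma V_prior_single_env: "V_prior \<delta> (return_pmf F) x0 (replicate t 0) = env_value \<delta> x0 F"
proof (rule antisym)
  note prior = binary_prior_return_pmf[OF F(1,2)] prior_consistent_return_pmf_zeros[OF F(3), of t]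
  show "V_prior \<delta> (return_pmf F) x0 (replicate t 0) \<le> env_value \<delta> x0 F"
    using V_prior_le_expected_env_value[OF \<delta> x0 prior]
      posterior_return_pmf[OF prior(2)]
    by (simp add: expected_env_value_def)
  have "wait_value \<delta> x0 F = U_prior \<delta> (\<lambda>_. 0) (return_pmf F) x0 (replicate t 0)"
    unfolding U_prior_single_env wait_value_def
    using env_discount_bounds[OF F(2), of \<delta>] \<delta> by (simp add: stop_value_never_stop)
  also have "\<dots> \<le> V_prior \<delta> (return_pmf F) x0 (replicate t 0)"
    using U_prior_le_V_prior[OF \<delta> x0 prior _ binary_rule_const] by simp
  finally show "env_value \<delta> x0 F \<le> V_prior \<delta> (return_pmf F) x0 (replicate t 0)"
    using x0_le_V_prior[OF \<delta> x0 prior] by (simp add: env_value_def)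
qed

lemma perf_ratio_mult_env_value_le:
  assumes "binary_rule s"
  shows "perf_ratio \<delta> X x0 s * env_value \<delta> x0 F
    \<le> stop_value (env_discount \<delta> F) x0 (env_reward \<delta> x0 F) s t"
proof -
  have "0 < env_value \<delta> x0 F"
    using x0 by (simp add: env_value_def)
  then show ?thesis
    using perf_ratio_le_ratio[OF \<delta> x0 assms binary_prior_return_pmf[OF F(1,2)]
        prior_consistent_return_pmf_zeros[OF F(3)], of t]
    by (simp add: U_prior_single_env V_prior_single_env pos_le_divide_eq)
qed

end

lemma perf_ratio_greatest:
  assumes "0 \<in> X"
    and "\<And>xs \<mu>. binary_prior X \<mu> \<Longrightarrow> prior_consistent \<mu> xs \<Longrightarrow>
      R \<le> U_prior \<delta> s \<mu> x0 xs / V_prior \<delta> \<mu> x0 xs"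
  shows "R \<le> perf_ratio \<delta> X x0 s"
  unfolding perf_ratio_def
proof (rule cINF_greatest)
  have "binary_prior X (return_pmf (0, 0)) \<and> prior_consistent (return_pmf (0, 0)) []"
    using assms(1) binary_prior_return_pmf[of "(0, 0)"]
    by (simp add: prior_consistent_def hist_prob_def)
  then show "{(xs, \<mu>). binary_prior X \<mu> \<and> prior_consistent \<mu> xs} \<noteq> {}"
    by blast
qed (use assms(2) in auto)

lemma perf_ratio_nonneg:
  assumes "0 < \<delta>" "\<delta> < 1" "0 < x0" "binary_rule s" "0 \<in> X"
  shows "0 \<le> perf_ratio \<delta> X x0 s"
  using ratio_nonneg[OF assms(1-3) _ _ assms(4)] by (intro perf_ratio_greatest[OF assms(5)])

text \<open>Tested against the environment that never offers anything, a rule earns x0 times its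
  discounted stopping probability, while the optimum is x0.\<close>
lemma perf_ratio_le_stop_prob:
  assumes "0 < \<delta>" "\<delta> < 1" "0 < x0" "binary_rule s" "0 \<in> X"
  shows "perf_ratio \<delta> X x0 s \<le> stop_prob \<delta> s 0"
proof -
  define F0 where "F0 = (0 :: real, 0 :: real)"
  have F0: "fst F0 \<in> X" "snd F0 \<in> {0..1}" "0 < alt_prob F0 0"
    using assms(5) by (simp_all add: F0_def alt_prob_def)
  have "env_discount \<delta> F0 = \<delta>" "env_reward \<delta> x0 F0 = 0" "env_value \<delta> x0 F0 = x0"
    using assms(3) by (simp_all add: F0_def env_discount_def env_reward_def env_value_def
        wait_value_def nonzero_prob_def)
  then have "perf_ratio \<delta> X x0 s * x0 \<le> x0 * stop_prob \<delta> s 0"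
    using perf_ratio_mult_env_value_le[OF assms(1-3) F0 assms(4), of 0]
      stop_value_linear[OF assms(4), of \<delta> x0 0 0] assms(1,2) by simp
  then show ?thesis
    using assms(3) by (simp add: mult.commute)
qed

lemma stop_prob_const_onto:
  assumes "0 \<le> \<delta>" "\<delta> < 1" "0 \<le> R" "R \<le> 1"
  obtains c where "0 \<le> c" "c \<le> 1" "stop_prob \<delta> (\<lambda>_. c) 0 = R"
proof
  have pos: "0 < 1 - \<delta> * R"
    using assms mult_left_le[of R \<delta>] by linarith
  define c where "c = R * (1 - \<delta>) / (1 - \<delta> * R)"
  show c0: "0 \<le> c"
    using assms pos by (simp add: c_def)
  show c1: "c \<le> 1"
    using assms pos by (simp add: c_def algebra_simps)
  have "1 - \<delta> * (1 - c) = (1 - \<delta>) / (1 - \<delta> * R)"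
    using pos by (simp add: c_def field_simps)
  then show "stop_prob \<delta> (\<lambda>_. c) 0 = R"
    using stop_prob_const[OF assms(1,2) c0 c1] pos assms(2) by (simp add: c_def)
qed

section \<open>Stationary rules do as well\<close>

context
  fixes \<delta> x0 c :: real and X :: "real set" and q :: "nat \<Rightarrow> real"
  assumes \<delta>: "0 < \<delta>" "\<delta> < 1" and x0: "0 < x0" and q: "binary_rule q" and c: "0 \<le> c" "c \<le> 1"
    and dominates: "stop_prob \<delta> (\<lambda>_. c) 0 \<le> stop_prob \<delta> q 0"
    and worst_case: "\<And>F t. fst F \<in> X \<Longrightarrow> snd F \<in> {0..1} \<Longrightarrow> 0 < alt_prob F 0 \<Longrightarrow>
      stop_prob \<delta> (\<lambda>_. c) 0 * env_value \<delta> x0 F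
        \<le> stop_value (env_discount \<delta> F) x0 (env_reward \<delta> x0 F) q t"
begin

lemma const_rule_env_bound_consistent:
  assumes F: "fst F \<in> X" "snd F \<in> {0..1}" "0 < alt_prob F 0"
  shows "stop_prob \<delta> (\<lambda>_. c) 0 * env_value \<delta> x0 F
    \<le> stop_value (env_discount \<delta> F) x0 (env_reward \<delta> x0 F) (\<lambda>_. c) t"
proof -
  define R where "R = stop_prob \<delta> (\<lambda>_. c) 0"
  define r where "r = env_discount \<delta> F"
  define b where "b = env_reward \<delta> x0 F"
  define D where "D = wait_value \<delta> x0 F"
  define \<phi> where "\<phi> = c / (1 - r * (1 - c))"
  have r: "0 \<le> r" "r \<le> \<delta>" "r < 1"
    using env_discount_bounds[OF F(2), of \<delta>] \<delta> by (simp_all add: r_def)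
  have D: "D = b / (1 - r)"
    by (simp add: D_def wait_value_def r_def b_def)
  have R0: "0 \<le> R"
    using stop_prob_bounds[OF binary_rule_const[OF c]] \<delta> by (simp add: R_def)
  have const_value: "stop_value r x0 b (\<lambda>_. c) t = x0 * \<phi> + D * (1 - \<phi>)"
    using stop_value_affine[OF binary_rule_const[OF c] r(1,3), of x0 b t]
    by (simp add: stop_prob_const[OF r(1,3) c] \<phi>_def D)
  have low: "R * x0 \<le> stop_value r x0 b (\<lambda>_. c) t"
  proof -
    have "(\<delta> - r) * x0 = \<delta> * nonzero_prob F * x0"
      by (simp add: r_def env_discount_def algebra_simps)
    also have "\<dots> \<le> b"
      using nonzero_prob_bounds[OF F(2)] \<delta> by (simp add: b_def env_reward_def mult_left_mono)
    finally show ?thesis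
      unfolding R_def using stop_value_const_ge[OF c r(1,2) \<delta>(2)] x0 by simp
  qed
  have high: "R * D \<le> stop_value r x0 b (\<lambda>_. c) t" if "x0 < D"
  proof -
    obtain t' where "stop_prob r (\<lambda>_. c) t' \<le> stop_prob r q t'"
      using exists_stop_prob_ge_const[OF q r(1,2) \<delta>(2) c dominates] by blast
    then have \<phi>_le: "\<phi> \<le> stop_prob r q t'"
      by (simp add: stop_prob_const[OF r(1,3) c] \<phi>_def)
    have "R * D = R * env_value \<delta> x0 F"
      using that by (simp add: env_value_def D_def)
    also have "\<dots> \<le> stop_value r x0 b q t'"
      using worst_case[OF F] by (simp add: R_def r_def b_def)
    also have "\<dots> = D - stop_prob r q t' * (D - x0)"
      using stop_value_affine[OF q r(1,3), of x0 b t'] by (simp add: D algebra_simps)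
    also have "\<dots> \<le> D - \<phi> * (D - x0)"
      using \<phi>_le that by (simp add: mult_right_mono)
    finally show ?thesis
      by (simp add: const_value algebra_simps)
  qed
  show ?thesis
    using low high R0 x0
    by (cases "x0 < D") (auto simp: env_value_def D_def R_def r_def b_def max_def)
qed

text \<open>An environment offering z \<noteq> 0 with certainty is consistent with no nonempty history of
  zeros, so the worst case of q gives no bound there; it is the limit of environments offering z
  with probability below 1.\<close>
lemma const_rule_env_bound:
  assumes F: "fst F \<in> X" "snd F \<in> {0..1}"
  shows "stop_prob \<delta> (\<lambda>_. c) 0 * env_value \<delta> x0 F
    \<le> stop_value (env_discount \<delta> F) x0 (env_reward \<delta> x0 F) (\<lambda>_. c) t"
proof (cases "0 < alt_prob F 0")
  case True
  then show ?thesis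
    using const_rule_env_bound_consistent[OF F] by blast
next
  case False
  obtain z \<sigma> where Fz: "F = (z, \<sigma>)"
    by (cases F)
  have z: "z \<noteq> 0" and \<sigma>: "\<sigma> = 1"
    using False F(2) by (auto simp: Fz alt_prob_def split: if_splits)
  define R where "R = stop_prob \<delta> (\<lambda>_. c) 0"
  define M where "M = max x0 z"
  define g where "g = (\<lambda>p. R * max x0 (\<delta> * p * M / (1 - \<delta> * (1 - p))))"
  define f where "f = (\<lambda>p. (c * x0 + (1 - c) * (\<delta> * p * M)) / (1 - \<delta> * (1 - p) * (1 - c)))"
  have "\<forall>\<^sub>F p in at_left 1. g p \<le> f p"
  proof (rule eventually_mono[OF eventually_at_left_real[of 0]])
    fix p :: real
    assume p: "p \<in> {0<..<1}"
    have Fp: "fst (z, p) \<in> X" "snd (z, p) \<in> {0..1}" "0 < alt_prob (z, p) 0"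
      using F p z by (auto simp: Fz alt_prob_def)
    have "\<delta> * (1 - p) \<le> \<delta> * 1"
      using p \<delta> by (intro mult_left_mono) auto
    moreover have "0 \<le> \<delta> * (1 - p)"
      using p \<delta> by simp
    ultimately have r: "0 \<le> \<delta> * (1 - p)" "\<delta> * (1 - p) < 1"
      using \<delta>(2) by linarith+
    show "g p \<le> f p"
      using const_rule_env_bound_consistent[OF Fp, of t] z
      by (simp add: g_def f_def R_def M_def env_value_def wait_value_def env_discount_def
          env_reward_def nonzero_prob_def stop_value_const[OF r c] mult_ac)
  qed simp
  moreover have "(g \<longlongrightarrow> g 1) (at_left 1)"
    unfolding g_def by (intro tendsto_intros) (use \<delta> in auto)
  moreover have "(f \<longlongrightarrow> f 1) (at_left 1)"
    unfolding f_def by (intro tendsto_intros) (use \<delta> in auto)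
  ultimately have "g 1 \<le> f 1"
    using tendsto_le[OF trivial_limit_at_left_real] by blast
  then show ?thesis
    using \<delta> c z
    by (simp add: Fz \<sigma> g_def f_def R_def M_def env_value_def wait_value_def env_discount_def
        env_reward_def nonzero_prob_def stop_value_const)
qed

end

lemma perf_ratio_ge_if_env_bound:
  assumes \<delta>: "0 < \<delta>" "\<delta> < 1" and x0: "0 < x0" and s: "binary_rule s" and "0 \<in> X"
    and R: "0 \<le> R" "R \<le> 1"
    and env: "\<And>F t. fst F \<in> X \<Longrightarrow> snd F \<in> {0..1} \<Longrightarrow>
      R * env_value \<delta> x0 F \<le> stop_value (env_discount \<delta> F) x0 (env_reward \<delta> x0 F) s t"
  shows "R \<le> perf_ratio \<delta> X x0 s"
proof (rule perf_ratio_greatest[OF \<open>0 \<in> X\<close>])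
  fix xs \<mu>
  assume prior: "binary_prior X \<mu>" "prior_consistent \<mu> xs"
  show "R \<le> U_prior \<delta> s \<mu> x0 xs / V_prior \<delta> \<mu> x0 xs"
  proof (cases "\<exists>x\<in>set xs. x \<noteq> 0")
    case True
    then show ?thesis
      using U_prior_nonzero_history[OF \<delta> x0 prior] V_prior_nonzero_history[OF \<delta> x0 prior]
        fold_max_ge[of x0 xs] x0 R(2) by simp
  next
    case False
    then have zeros: "\<forall>x\<in>set xs. x = 0"
      by simp
    have "R * V_prior \<delta> \<mu> x0 xs \<le> R * expected_env_value \<delta> x0 \<mu> xs"
      using V_prior_le_expected_env_value[OF \<delta> x0 prior zeros] R(1) by (rule mult_left_mono)
    also have "\<dots> = (\<Sum>F\<in>set_pmf \<mu>. posterior \<mu> xs F * (R * env_value \<delta> x0 F))"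
      by (simp add: expected_env_value_def sum_distrib_left mult_ac)
    also have "\<dots> \<le> (\<Sum>F\<in>set_pmf \<mu>. posterior \<mu> xs F *
        stop_value (env_discount \<delta> F) x0 (env_reward \<delta> x0 F) s (length xs))"
      using prior posterior_nonneg[OF prior] env
      by (intro sum_mono mult_left_mono) (auto simp: binary_prior_def)
    also have "\<dots> = U_prior \<delta> s \<mu> x0 xs"
      by (rule U_prior_zero_history[OF \<delta> x0 prior zeros, symmetric])
    finally show ?thesis
      using x0_le_V_prior[OF \<delta> x0 prior zeros] x0 by (simp add: pos_le_divide_eq)
  qed
qed

theorem proposition4:
  fixes \<delta> x0 :: real and X :: "real set" and q :: "nat \<Rightarrow> real"
  assumes "0 < \<delta>" "\<delta> < 1"
    and "X \<in> sets borel" "X \<subseteq> {0..}" "0 \<in> X"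
    and "x0 > 0"
    and "binary_rule q"
  shows "\<exists>qbar. binary_rule qbar \<and> stationary_rule qbar \<and>
           perf_ratio \<delta> X x0 qbar \<ge> perf_ratio \<delta> X x0 q"
proof -
  note \<delta> = assms(1,2) and x0 = assms(6) and q = assms(7)
  define R where "R = perf_ratio \<delta> X x0 q"
  have R: "0 \<le> R" "R \<le> stop_prob \<delta> q 0" "stop_prob \<delta> q 0 \<le> 1"
    using perf_ratio_nonneg[OF \<delta> x0 q assms(5)] perf_ratio_le_stop_prob[OF \<delta> x0 q assms(5)]
      stop_prob_bounds[OF q] \<delta> by (simp_all add: R_def)
  obtain c where c: "0 \<le> c" "c \<le> 1" "stop_prob \<delta> (\<lambda>_. c) 0 = R"
    using stop_prob_const_onto[of \<delta> R] \<delta> R by auto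
  have dominates: "stop_prob \<delta> (\<lambda>_. c) 0 \<le> stop_prob \<delta> q 0"
    using c(3) R(2) by simp
  have worst_case: "stop_prob \<delta> (\<lambda>_. c) 0 * env_value \<delta> x0 F
      \<le> stop_value (env_discount \<delta> F) x0 (env_reward \<delta> x0 F) q t"
    if "fst F \<in> X" "snd F \<in> {0..1}" "0 < alt_prob F 0" for F t
    using perf_ratio_mult_env_value_le[OF \<delta> x0 that q] c(3) by (simp add: R_def)
  have "R \<le> perf_ratio \<delta> X x0 (\<lambda>_. c)"
    using const_rule_env_bound[OF \<delta> x0 q c(1,2) dominates worst_case] c(3) R
    by (intro perf_ratio_ge_if_env_bound[OF \<delta> x0 binary_rule_const[OF c(1,2)] assms(5)]) auto
  then show ?thesis
    using binary_rule_const[OF c(1,2)] by (auto simp: stationary_rule_def R_def)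
qed

end
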